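(* Let $(X_j)_{j\in\mathbb{Z}^2}$ be i.i.d. Poisson random variables with mean $\lambda>0$ and let $N_n$ be the greedy lattice animal weight of size $n$. Then for every $k\in\mathbb{N}$ there is $C<\infty$ (depending on $k,\lambda$) such that $\mathbb{E}N_n^k\le Cn^k$ for all $n\in\mathbb{N}$.
   Context: A lattice animal is a connected subset of $\mathbb{Z}^2$ containing the origin; $A(n)$ is the set of lattice animals with $n$ sites; $N_n=\max_{\mathcal{A}\in A(n)}\sum_{k\in\mathcal{A}}X_k$. *)

theory Defs
  imports "HOL-Probability.Probability"
begin

definition lattice_adj :: "int \<times> int \<Rightarrow> int \<times> int \<Rightarrow> bool" where
  "lattice_adj a b \<longleftrightarrow> \<bar>fst a - fst b\<bar> + \<bar>snd a - snd b\<bar> = 1"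

definition lattice_connected :: "(int \<times> int) set \<Rightarrow> bool" where
  "lattice_connected A \<longleftrightarrow>
     (\<forall>x\<in>A. \<forall>y\<in>A. (x, y) \<in> {(a, b). a \<in> A \<and> b \<in> A \<and> lattice_adj a b}\<^sup>*)"

definition lattice_animals :: "nat \<Rightarrow> (int \<times> int) set set" where
  "lattice_animals n = {A. finite A \<and> card A = n \<and> (0, 0) \<in> A \<and> lattice_connected A}"

definition greedy_animal :: "(int \<times> int \<Rightarrow> 'a \<Rightarrow> nat) \<Rightarrow> nat \<Rightarrow> 'a \<Rightarrow> nat" where
  "greedy_animal X n \<omega> = Max ((\<lambda>A. \<Sum>j\<in>A. X j \<omega>) ` lattice_animals n)"

end

theory Submission
  imports Defs
begin

text \<open>A lattice animal of size n is swept out by a nearest-neighbour walk from the origin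
  with 2(n - 1) steps: add the sites one at a time, reaching each new neighbour v of an already
  visited site u by a detour u, v, u. Hence there are at most 16^n animals. If q = E exp(2 X),
  bounding exp(2 N_n) by the sum over all animals A of the product of exp(2 X_j), j in A, and
  using independence gives E exp(2 N_n) <= (16 q)^n. Since x^k <= t^k + k! exp(2x - t) for
  x, t >= 0, the choice t = n ln(16 q) yields E N_n^k <= (n ln(16 q))^k + k!.\<close>

definition lattice_steps :: "(int \<times> int) set" where
  "lattice_steps = {(1, 0), (-1, 0), (0, 1), (0, -1)}"

fun walk_sites :: "int \<times> int \<Rightarrow> (int \<times> int) list \<Rightarrow> (int \<times> int) set" where
  "walk_sites p [] = {p}"
| "walk_sites p (d # ds) = insert p (walk_sites (p + d) ds)"

lemma finite_walk_sites [simp]: "finite (walk_sites p ds)"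
  by (induction ds arbitrary: p) auto

lemma start_in_walk_sites: "p \<in> walk_sites p ds"
  by (cases ds) auto

lemma walk_sites_detour:
  "b \<in> walk_sites p ds \<Longrightarrow> \<exists>ds'. walk_sites p ds' = insert a (walk_sites p ds)
     \<and> length ds' = length ds + 2 \<and> set ds' \<subseteq> {a - b, b - a} \<union> set ds"
proof (induction ds arbitrary: p)
  case Nil
  then show ?case
    by (intro exI[of _ "[a - b, b - a]"]) auto
next
  case (Cons d ds)
  show ?case
  proof (cases "b = p")
    case True
    then show ?thesis
      by (intro exI[of _ "(a - b) # (b - a) # d # ds"]) auto
  next
    case False
    with Cons.prems have "b \<in> walk_sites (p + d) ds" by simp
    from Cons.IH[OF this] obtain ds' where
      "walk_sites (p + d) ds' = insert a (walk_sites (p + d) ds)"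
      "length ds' = length ds + 2" "set ds' \<subseteq> {a - b, b - a} \<union> set ds"
      by blast
    then show ?thesis
      by (intro exI[of _ "d # ds'"]) auto
  qed
qed

lemma lattice_adj_sym: "lattice_adj a b \<longleftrightarrow> lattice_adj b a"
  unfolding lattice_adj_def by (simp add: abs_minus_commute)

lemma lattice_adj_diff_in_steps: "lattice_adj a b \<Longrightarrow> b - a \<in> lattice_steps"
  unfolding lattice_adj_def lattice_steps_def
  by (cases a; cases b) (auto simp: abs_if split: if_splits)

lemma rtrancl_leaves_set:
  assumes "(x, y) \<in> R\<^sup>*" "x \<in> B" "y \<notin> B"
  obtains u v where "(u, v) \<in> R" "u \<in> B" "v \<notin> B"
  using assms by (induction rule: rtrancl_induct) auto

lemma lattice_connected_walk_exists:
  assumes A: "finite A" "p \<in> A" "lattice_connected A"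
  shows "k < card A \<Longrightarrow> \<exists>ds. length ds = 2 * k \<and> set ds \<subseteq> lattice_steps
            \<and> walk_sites p ds \<subseteq> A \<and> card (walk_sites p ds) = Suc k"
proof (induction k)
  case 0
  then show ?case using A by (intro exI[of _ "[]"]) auto
next
  case (Suc k)
  then obtain ds where ds: "length ds = 2 * k" "set ds \<subseteq> lattice_steps"
      "walk_sites p ds \<subseteq> A" "card (walk_sites p ds) = Suc k" by auto
  moreover have "walk_sites p ds \<noteq> A" using ds(4) Suc.prems by auto
  ultimately obtain c where c: "c \<in> A" "c \<notin> walk_sites p ds" by blast
  have "(p, c) \<in> {(a, b). a \<in> A \<and> b \<in> A \<and> lattice_adj a b}\<^sup>*"
    using A c unfolding lattice_connected_def by blast
  then obtain u v where "(u, v) \<in> {(a, b). a \<in> A \<and> b \<in> A \<and> lattice_adj a b}"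
      "u \<in> walk_sites p ds" "v \<notin> walk_sites p ds"
    by (rule rtrancl_leaves_set[OF _ start_in_walk_sites c(2)])
  then have uv: "v \<in> A" "lattice_adj u v" "u \<in> walk_sites p ds" "v \<notin> walk_sites p ds"
    by auto
  from walk_sites_detour[OF uv(3), of v] obtain ds' where ds':
    "walk_sites p ds' = insert v (walk_sites p ds)" "length ds' = length ds + 2"
    "set ds' \<subseteq> {v - u, u - v} \<union> set ds"
    by blast
  have "set ds' \<subseteq> lattice_steps"
    using ds'(3) ds(2) uv(2) lattice_adj_diff_in_steps lattice_adj_sym by blast
  with ds ds' uv show ?case by (intro exI[of _ ds']) auto
qed

lemma lattice_animals_subset_walks:
  "lattice_animals (Suc m)
     \<subseteq> walk_sites (0, 0) ` {ds. set ds \<subseteq> lattice_steps \<and> length ds = 2 * m}"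
proof
  fix A assume "A \<in> lattice_animals (Suc m)"
  then have A: "finite A" "card A = Suc m" "(0, 0) \<in> A" "lattice_connected A"
    unfolding lattice_animals_def by auto
  from lattice_connected_walk_exists[OF A(1,3,4), of m] A(2) obtain ds where
    ds: "length ds = 2 * m" "set ds \<subseteq> lattice_steps" "walk_sites (0, 0) ds \<subseteq> A"
      "card (walk_sites (0, 0) ds) = Suc m" by auto
  then have "walk_sites (0, 0) ds = A" using card_subset_eq[OF A(1)] A(2) by simp
  with ds show "A \<in> walk_sites (0, 0) ` {ds. set ds \<subseteq> lattice_steps \<and> length ds = 2 * m}"
    by auto
qed

lemma lattice_animals_0 [simp]: "lattice_animals 0 = {}"
  unfolding lattice_animals_def by auto

lemma finite_lattice_animals: "finite (lattice_animals n)"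
  and card_lattice_animals_le: "card (lattice_animals n) \<le> 16 ^ n"
proof -
  have steps: "finite lattice_steps" "card lattice_steps = 4"
    unfolding lattice_steps_def by auto
  have "finite (lattice_animals n) \<and> card (lattice_animals n) \<le> 16 ^ n"
  proof (cases n)
    case (Suc m)
    let ?W = "{ds. set ds \<subseteq> lattice_steps \<and> length ds = 2 * m}"
    have W: "finite ?W" "card ?W = 16 ^ m"
      using finite_lists_length_eq[OF steps(1)] card_lists_length_eq[OF steps(1)] steps(2)
      by (simp_all add: power_mult)
    have "card (lattice_animals n) \<le> card (walk_sites (0, 0) ` ?W)"
      unfolding Suc by (rule card_mono[OF finite_imageI[OF W(1)] lattice_animals_subset_walks])
    also have "\<dots> \<le> 16 ^ m" using card_image_le[OF W(1)] W(2) by simp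
    also have "\<dots> \<le> 16 ^ n" unfolding Suc by simp
    finally show ?thesis
      using finite_subset[OF lattice_animals_subset_walks finite_imageI[OF W(1)]] Suc by simp
  qed simp
  then show "finite (lattice_animals n)" "card (lattice_animals n) \<le> 16 ^ n" by auto
qed

lemma segment_in_lattice_animals:
  assumes "n \<ge> 1"
  shows "(\<lambda>i. (int i, 0)) ` {..<n} \<in> lattice_animals n"
proof -
  define S where "S = (\<lambda>i. (int i, 0 :: int)) ` {..<n}"
  define R where "R = {(a, b). a \<in> S \<and> b \<in> S \<and> lattice_adj a b}"
  have from_origin: "((0, 0), (int i, 0)) \<in> R\<^sup>*" if "i < n" for i
    using that
  proof (induction i)
    case (Suc i)
    then have "((int i, 0), (int (Suc i), 0)) \<in> R"
      unfolding R_def S_def lattice_adj_def by force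
    with Suc show ?case by (meson Suc_lessD rtrancl_into_rtrancl)
  qed simp
  have "sym R" unfolding R_def sym_def using lattice_adj_sym by blast
  then have "sym (R\<^sup>*)" by (rule sym_rtrancl)
  then have "(x, y) \<in> R\<^sup>*" if "x \<in> S" "y \<in> S" for x y
    using that from_origin unfolding S_def by (auto dest: symD intro: rtrancl_trans)
  then have "lattice_connected S" unfolding lattice_connected_def R_def by blast
  moreover have "card S = n" unfolding S_def by (simp add: card_image inj_on_def)
  ultimately show ?thesis using assms unfolding lattice_animals_def S_def by force
qed

lemma greedy_animal_attained:
  assumes "n \<ge> 1"
  obtains A where "A \<in> lattice_animals n" "greedy_animal X n \<omega> = (\<Sum>j\<in>A. X j \<omega>)"
proof -
  have "lattice_animals n \<noteq> {}" using segment_in_lattice_animals[OF assms] by blast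
  then have "greedy_animal X n \<omega> \<in> (\<lambda>A. \<Sum>j\<in>A. X j \<omega>) ` lattice_animals n"
    unfolding greedy_animal_def by (intro Max_in) (simp_all add: finite_lattice_animals)
  with that show ?thesis by blast
qed

lemma borel_measurable_greedy_animal:
  assumes "\<And>j. X j \<in> measurable M (count_space UNIV)"
  shows "(\<lambda>\<omega>. real (greedy_animal X n \<omega>)) \<in> borel_measurable M"
proof -
  have [measurable]: "X j \<in> borel_measurable M" for j
    using assms by (simp add: measurable_cong_sets[OF refl sets_borel_eq_count_space])
  have "greedy_animal X n \<in> borel_measurable M"
    unfolding greedy_animal_def[abs_def] using finite_lattice_animals by measurable
  then show ?thesis by (simp add: measurable_cong_sets[OF refl sets_borel_eq_count_space])
qed

lemma nn_integral_poisson_exp: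
  assumes "lam > 0"
  shows "(\<integral>\<^sup>+x. ennreal (exp (s * real x)) \<partial>measure_pmf (poisson_pmf lam))
           = ennreal (exp (lam * (exp s - 1)))"
proof -
  have pmf_times_exp: "ennreal (pmf (poisson_pmf lam) x) * ennreal (exp (s * real x))
      = ennreal (exp (-lam) * ((lam * exp s) ^ x / fact x))" for x
  proof -
    have "exp (s * real x) = exp s ^ x"
      by (metis exp_of_nat_mult mult.commute)
    then show ?thesis
      using assms by (simp add: ennreal_mult'[symmetric] power_mult_distrib)
  qed
  have "(\<lambda>x. exp (-lam) * ((lam * exp s) ^ x / fact x)) sums (exp (-lam) * exp (lam * exp s))"
    using sums_mult[OF exp_converges[of "lam * exp s"], of "exp (-lam)"]
    by (simp add: divide_inverse mult.commute)
  then have "(\<Sum>x. ennreal (exp (-lam) * ((lam * exp s) ^ x / fact x)))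
      = ennreal (exp (-lam) * exp (lam * exp s))"
    using assms by (subst suminf_ennreal2) (auto simp: sums_iff)
  moreover have "exp (-lam) * exp (lam * exp s) = exp (lam * (exp s - 1))"
    by (simp add: mult_exp_exp algebra_simps)
  ultimately show ?thesis
    by (simp add: nn_integral_measure_pmf nn_integral_count_space_nat pmf_times_exp)
qed

lemma power_le_fact_mult_exp:
  fixes x :: real
  assumes "0 \<le> x"
  shows "x ^ k \<le> fact k * exp x"
proof -
  have exp_sums: "(\<lambda>n. x ^ n / fact n) sums exp x"
    using exp_converges[of x] by (simp add: divide_inverse mult.commute)
  have "x ^ k / fact k \<le> (\<Sum>n. x ^ n / fact n)"
    using sum_le_suminf[OF sums_summable[OF exp_sums], of "{k}"] assms by simp
  then show ?thesis using sums_unique[OF exp_sums] by (simp add: divide_le_eq mult.commute)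
qed

lemma power_le_split_exp:
  fixes x t :: real
  assumes "0 \<le> x" "0 \<le> t"
  shows "x ^ k \<le> t ^ k + fact k * exp (2 * x - t)"
proof (cases "x \<le> t")
  case True
  then have "x ^ k \<le> t ^ k" using assms by (intro power_mono)
  then show ?thesis by (simp add: add_increasing2)
next
  case False
  have "x ^ k \<le> fact k * exp x" by (rule power_le_fact_mult_exp[OF assms(1)])
  also have "\<dots> \<le> fact k * exp (2 * x - t)" using False by simp
  finally show ?thesis using assms by (simp add: add_increasing)
qed

lemma (in prob_space) nn_integral_power_le_exp_moment:
  assumes [measurable]: "f \<in> borel_measurable M" and "\<And>\<omega>. 0 \<le> f \<omega>" "0 \<le> t"
  shows "(\<integral>\<^sup>+\<omega>. ennreal (f \<omega> ^ k) \<partial>M)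
           \<le> ennreal (t ^ k) + ennreal (fact k * exp (- t)) * (\<integral>\<^sup>+\<omega>. ennreal (exp (2 * f \<omega>)) \<partial>M)"
proof -
  have "ennreal (f \<omega> ^ k) \<le> ennreal (t ^ k) + ennreal (fact k * exp (- t)) * ennreal (exp (2 * f \<omega>))"
    for \<omega>
    using power_le_split_exp[OF assms(2,3), of \<omega> k] assms(3)
    by (simp add: ennreal_plus[symmetric] ennreal_mult[symmetric] exp_diff exp_minus field_simps)
  then have "(\<integral>\<^sup>+\<omega>. ennreal (f \<omega> ^ k) \<partial>M)
      \<le> (\<integral>\<^sup>+\<omega>. ennreal (t ^ k) + ennreal (fact k * exp (- t)) * ennreal (exp (2 * f \<omega>)) \<partial>M)"
    by (rule nn_integral_mono)
  also have "\<dots> = ennreal (t ^ k) + ennreal (fact k * exp (- t)) * (\<integral>\<^sup>+\<omega>. ennreal (exp (2 * f \<omega>)) \<partial>M)"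
    by (simp add: nn_integral_add nn_integral_cmult emeasure_space_1)
  finally show ?thesis .
qed

lemma (in prob_space) nn_integral_exp_greedy_animal_le:
  assumes [measurable]: "\<And>j. X j \<in> measurable M (count_space UNIV)"
    and indep: "indep_vars (\<lambda>_. count_space UNIV) X UNIV"
    and moment: "\<And>j. (\<integral>\<^sup>+\<omega>. ennreal (exp (s * real (X j \<omega>))) \<partial>M) = m"
    and "n \<ge> 1"
  shows "(\<integral>\<^sup>+\<omega>. ennreal (exp (s * real (greedy_animal X n \<omega>))) \<partial>M) \<le> (16 * m) ^ n"
proof -
  define g where "g A \<omega> = (\<Prod>j\<in>A. ennreal (exp (s * real (X j \<omega>))))" for A \<omega>
  have [measurable]: "g A \<in> borel_measurable M" for A
    unfolding g_def by measurable
  have exp_le_sum: "ennreal (exp (s * real (greedy_animal X n \<omega>))) \<le> (\<Sum>A\<in>lattice_animals n. g A \<omega>)"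
    for \<omega>
  proof -
    obtain A where A: "A \<in> lattice_animals n" "greedy_animal X n \<omega> = (\<Sum>j\<in>A. X j \<omega>)"
      using greedy_animal_attained[OF \<open>n \<ge> 1\<close>] .
    then have "ennreal (exp (s * real (greedy_animal X n \<omega>))) = g A \<omega>"
      unfolding g_def
      by (simp add: sum_distrib_left exp_sum prod_ennreal lattice_animals_def)
    also have "\<dots> \<le> (\<Sum>A\<in>lattice_animals n. g A \<omega>)"
      by (rule member_le_sum[OF A(1) _ finite_lattice_animals]) simp
    finally show ?thesis .
  qed
  have integral_g: "(\<integral>\<^sup>+\<omega>. g A \<omega> \<partial>M) = m ^ n" if "A \<in> lattice_animals n" for A
  proof -
    have "finite A" "card A = n" using that unfolding lattice_animals_def by auto
    have "(\<integral>\<^sup>+\<omega>. g A \<omega> \<partial>M) = (\<Prod>j\<in>A. \<integral>\<^sup>+\<omega>. ennreal (exp (s * real (X j \<omega>))) \<partial>M)"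
      unfolding g_def
      using indep_vars_compose2[OF indep, of "\<lambda>_ x. ennreal (exp (s * real x))" "\<lambda>_. borel"]
      by (intro indep_vars_nn_integral[OF \<open>finite A\<close>]) (auto intro: indep_vars_subset)
    then show ?thesis using \<open>card A = n\<close> by (simp add: moment)
  qed
  have "(\<integral>\<^sup>+\<omega>. ennreal (exp (s * real (greedy_animal X n \<omega>))) \<partial>M)
      \<le> (\<integral>\<^sup>+\<omega>. (\<Sum>A\<in>lattice_animals n. g A \<omega>) \<partial>M)"
    by (intro nn_integral_mono exp_le_sum)
  also have "\<dots> = of_nat (card (lattice_animals n)) * m ^ n"
    by (simp add: nn_integral_sum integral_g)
  also have "\<dots> \<le> 16 ^ n * m ^ n"
  proof (rule mult_right_mono)
    have "of_nat (card (lattice_animals n)) \<le> (of_nat (16 ^ n) :: ennreal)"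
      using card_lattice_animals_le by (simp only: of_nat_le_iff)
    then show "of_nat (card (lattice_animals n)) \<le> (16 ^ n :: ennreal)" by simp
  qed simp
  also have "\<dots> = (16 * m) ^ n" by (simp add: power_mult_distrib)
  finally show ?thesis .
qed

lemma (in prob_space) nn_integral_greedy_animal_power_le:
  assumes "\<And>j. X j \<in> measurable M (count_space UNIV)"
    and "indep_vars (\<lambda>_. count_space UNIV) X UNIV"
    and "\<And>j. (\<integral>\<^sup>+\<omega>. ennreal (exp (2 * real (X j \<omega>))) \<partial>M) = ennreal q"
    and "q \<ge> 1" "n \<ge> 1"
  shows "(\<integral>\<^sup>+\<omega>. ennreal (real (greedy_animal X n \<omega>) ^ k) \<partial>M)
           \<le> ennreal ((ln (16 * q) ^ k + fact k) * real n ^ k)"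
proof -
  define t where "t = real n * ln (16 * q)"
  have t: "0 \<le> t" "exp t = (16 * q) ^ n"
    unfolding t_def using \<open>q \<ge> 1\<close> by (simp_all add: exp_of_nat_mult)
  have "(\<integral>\<^sup>+\<omega>. ennreal (real (greedy_animal X n \<omega>) ^ k) \<partial>M)
      \<le> ennreal (t ^ k) + ennreal (fact k * exp (- t))
          * (\<integral>\<^sup>+\<omega>. ennreal (exp (2 * real (greedy_animal X n \<omega>))) \<partial>M)"
    by (rule nn_integral_power_le_exp_moment[OF borel_measurable_greedy_animal[OF assms(1)] _ t(1)])
      simp
  also have "\<dots> \<le> ennreal (t ^ k) + ennreal (fact k * exp (- t)) * (16 * ennreal q) ^ n"
    by (intro add_left_mono mult_left_mono nn_integral_exp_greedy_animal_le[OF assms(1,2,3,5)]) simp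
  also have "ennreal (fact k * exp (- t)) * (16 * ennreal q) ^ n
      = ennreal (fact k * exp (- t) * (16 * q) ^ n)"
    using \<open>q \<ge> 1\<close> by (simp add: ennreal_mult ennreal_power[symmetric])
  also have "fact k * exp (- t) * (16 * q) ^ n = fact k"
    unfolding t(2)[symmetric] by (simp add: exp_minus)
  also have "ennreal (t ^ k) + ennreal (fact k) = ennreal (t ^ k + fact k)"
    using t(1) by (simp add: ennreal_plus)
  also have "\<dots> \<le> ennreal ((ln (16 * q) ^ k + fact k) * real n ^ k)"
    using \<open>n \<ge> 1\<close> by (intro ennreal_leI) (simp add: t_def power_mult_distrib distrib_right)
  finally show ?thesis .
qed

theorem corollary3p2:
  fixes M :: "'a measure" and X :: "int \<times> int \<Rightarrow> 'a \<Rightarrow> nat" and lam :: real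
  assumes "prob_space M"
    and "lam > 0"
    and "\<And>j. X j \<in> measurable M (count_space UNIV)"
    and "prob_space.indep_vars M (\<lambda>_. count_space UNIV) X UNIV"
    and "\<And>j. distr M (count_space UNIV) (X j) = measure_pmf (poisson_pmf lam)"
  shows "\<forall>k::nat. \<exists>C::real. \<forall>n::nat. n \<ge> 1 \<longrightarrow>
           (\<integral>\<^sup>+ \<omega>. ennreal (real (greedy_animal X n \<omega>) ^ k) \<partial>M) \<le> ennreal (C * real n ^ k)"
proof -
  interpret prob_space M by fact
  define q where "q = exp (lam * (exp 2 - 1))"
  have "q \<ge> 1" unfolding q_def using \<open>lam > 0\<close> by simp
  have "(\<integral>\<^sup>+\<omega>. ennreal (exp (2 * real (X j \<omega>))) \<partial>M) = ennreal q" for j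
    using nn_integral_distr[of "X j" M "count_space UNIV" "\<lambda>x. ennreal (exp (2 * real x))"]
      assms(3,5) nn_integral_poisson_exp[OF \<open>lam > 0\<close>]
    by (simp add: q_def)
  then show ?thesis
    using nn_integral_greedy_animal_power_le[OF assms(3,4) _ \<open>q \<ge> 1\<close>] by blast
qed

end
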